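(* Let $\gamma$ be an abstract graph and $\gamma'$ a subgraph of $\gamma$ such that every automorphism of $\gamma$ maps $\gamma'$ to itself setwise. Let $\Gamma$ be an embedding of $\gamma$ in $S^3$ and $\Gamma'$ the embedding of $\gamma'$ induced by $\Gamma$. Then ${\mathrm{TSG}}(\Gamma)\leq{\mathrm{TSG}}(\Gamma')$ and ${\mathrm{TSG}}_+(\Gamma)\leq{\mathrm{TSG}}_+(\Gamma')$.
   Context: An embedding of a finite graph $\gamma$ in $S^3$ places the vertices at distinct points and the edges as arcs that meet only at common endpoints; its image $\Gamma$ is a spatial graph. A homeomorphism $h$ of $S^3$ with $h(\Gamma)=\Gamma$ induces an automorphism of $\gamma$. The topological symmetry group ${\mathrm{TSG}}(\Gamma)$ is the subgroup of ${\mathrm{Aut}}(\gamma)$ of automorphisms induced by homeomorphisms of $(S^3,\Gamma)$; ${\mathrm{TSG}}_+(\Gamma)$ is the subgroup induced by orientation-preserving homeomorphisms. In the statement, an automorphism of $\gamma$ induced by a homeomorphism of $(S^3,\Gamma)$ is regarded, via that same homeomorphism (which preserves $\Gamma'$), as an automorphism of $\gamma'$. *)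

theory Defs
  imports "HOL-Analysis.Analysis" "HOL-Homology.Homology"
begin

text \<open>S^3 is the unit sphere nsphere 3 in R^4 (points of type nat => real).
 A finite simple graph is given by a vertex set V and an edge set E of 2-element subsets of V.\<close>

abbreviation S3 :: "(nat \<Rightarrow> real) topology" where "S3 \<equiv> nsphere 3"

definition finite_graph :: "'v set \<Rightarrow> 'v set set \<Rightarrow> bool" where
  "finite_graph V E \<longleftrightarrow> finite V \<and> (\<forall>e\<in>E. e \<subseteq> V \<and> card e = 2)"

definition subgraph :: "'v set \<Rightarrow> 'v set set \<Rightarrow> 'v set \<Rightarrow> 'v set set \<Rightarrow> bool" where
  "subgraph V' E' V E \<longleftrightarrow> V' \<subseteq> V \<and> E' \<subseteq> E \<and> (\<forall>e\<in>E'. e \<subseteq> V')"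

definition graph_aut :: "'v set \<Rightarrow> 'v set set \<Rightarrow> ('v \<Rightarrow> 'v) \<Rightarrow> bool" where
  "graph_aut V E \<phi> \<longleftrightarrow> bij_betw \<phi> V V \<and> (\<forall>x. x \<notin> V \<longrightarrow> \<phi> x = x)
     \<and> (\<forall>e. e \<subseteq> V \<longrightarrow> (\<phi> ` e \<in> E \<longleftrightarrow> e \<in> E))"

definition arc_in :: "(real \<Rightarrow> nat \<Rightarrow> real) \<Rightarrow> bool" where
  "arc_in g \<longleftrightarrow> pathin S3 g \<and> inj_on g {0..1}"

definition arc_img :: "(real \<Rightarrow> nat \<Rightarrow> real) \<Rightarrow> (nat \<Rightarrow> real) set" where
  "arc_img g = g ` {0..1}"

definition spatial_embedding ::
  "'v set \<Rightarrow> 'v set set \<Rightarrow> ('v \<Rightarrow> nat \<Rightarrow> real) \<Rightarrow> ('v set \<Rightarrow> real \<Rightarrow> nat \<Rightarrow> real) \<Rightarrow> bool" where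
  "spatial_embedding V E pos ar \<longleftrightarrow>
     inj_on pos V \<and> pos ` V \<subseteq> topspace S3
   \<and> (\<forall>e\<in>E. arc_in (ar e) \<and> {ar e 0, ar e 1} = pos ` e
            \<and> arc_img (ar e) \<inter> pos ` V = pos ` e)
   \<and> (\<forall>e\<in>E. \<forall>e'\<in>E. e \<noteq> e' \<longrightarrow> arc_img (ar e) \<inter> arc_img (ar e') = pos ` (e \<inter> e'))"

definition spatial_image ::
  "'v set \<Rightarrow> 'v set set \<Rightarrow> ('v \<Rightarrow> nat \<Rightarrow> real) \<Rightarrow> ('v set \<Rightarrow> real \<Rightarrow> nat \<Rightarrow> real) \<Rightarrow> (nat \<Rightarrow> real) set" where
  "spatial_image V E pos ar = pos ` V \<union> (\<Union>e\<in>E. arc_img (ar e))"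

definition induces_aut ::
  "'v set \<Rightarrow> 'v set set \<Rightarrow> ('v \<Rightarrow> nat \<Rightarrow> real) \<Rightarrow> ('v set \<Rightarrow> real \<Rightarrow> nat \<Rightarrow> real)
   \<Rightarrow> ((nat \<Rightarrow> real) \<Rightarrow> nat \<Rightarrow> real) \<Rightarrow> ('v \<Rightarrow> 'v) \<Rightarrow> bool" where
  "induces_aut V E pos ar h \<phi> \<longleftrightarrow> graph_aut V E \<phi>
     \<and> (\<forall>v\<in>V. h (pos v) = pos (\<phi> v))
     \<and> (\<forall>e\<in>E. h ` arc_img (ar e) = arc_img (ar (\<phi> ` e)))"

definition TSG ::
  "'v set \<Rightarrow> 'v set set \<Rightarrow> ('v \<Rightarrow> nat \<Rightarrow> real) \<Rightarrow> ('v set \<Rightarrow> real \<Rightarrow> nat \<Rightarrow> real) \<Rightarrow> ('v \<Rightarrow> 'v) set" where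
  "TSG V E pos ar = {\<phi>. \<exists>h. homeomorphic_map S3 S3 h
       \<and> h ` spatial_image V E pos ar = spatial_image V E pos ar
       \<and> induces_aut V E pos ar h \<phi>}"

text \<open>Orientation-preserving: Brouwer degree 1 on S^3.\<close>
definition TSG_plus ::
  "'v set \<Rightarrow> 'v set set \<Rightarrow> ('v \<Rightarrow> nat \<Rightarrow> real) \<Rightarrow> ('v set \<Rightarrow> real \<Rightarrow> nat \<Rightarrow> real) \<Rightarrow> ('v \<Rightarrow> 'v) set" where
  "TSG_plus V E pos ar = {\<phi>. \<exists>h. homeomorphic_map S3 S3 h \<and> Brouwer_degree2 3 h = 1
       \<and> h ` spatial_image V E pos ar = spatial_image V E pos ar
       \<and> induces_aut V E pos ar h \<phi>}"

definition restr_aut :: "'v set \<Rightarrow> ('v \<Rightarrow> 'v) \<Rightarrow> 'v \<Rightarrow> 'v" where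
  "restr_aut V' \<phi> = (\<lambda>x. if x \<in> V' then \<phi> x else x)"

end

theory Submission
  imports Defs
begin

text \<open>A homeomorphism h of (S^3, \<Gamma>) inducing \<phi> maps the vertices and arcs of \<Gamma> according
  to \<phi>. Since \<phi> leaves \<gamma>' invariant, its restriction \<psi> to the vertices of \<gamma>' is an
  automorphism of \<gamma>', and the same h maps the vertices and arcs of \<Gamma>' according to \<psi>;
  in particular h maps \<Gamma>' onto itself. The degree of h is not involved, so the oriented
  version follows verbatim.\<close>

lemma graph_aut_image_vertices:
  assumes "graph_aut V E \<phi>"
  shows "\<phi> ` V = V"
  using assms unfolding graph_aut_def bij_betw_def by blast

lemma graph_aut_image_edges:
  assumes aut: "graph_aut V E \<phi>" and edges: "\<forall>e\<in>E. e \<subseteq> V"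
  shows "(\<lambda>e. \<phi> ` e) ` E = E"
proof
  show "(\<lambda>e. \<phi> ` e) ` E \<subseteq> E"
    using aut edges unfolding graph_aut_def by blast
next
  show "E \<subseteq> (\<lambda>e. \<phi> ` e) ` E"
  proof
    fix e assume e: "e \<in> E"
    define e0 where "e0 = inv_into V \<phi> ` e"
    have \<phi>V: "\<phi> ` V = V" using graph_aut_image_vertices[OF aut] .
    have "e \<subseteq> V" using e edges by blast
    have "e0 \<subseteq> V" unfolding e0_def
      using \<open>e \<subseteq> V\<close> inv_into_into[of _ \<phi> V] \<phi>V by blast
    moreover have "\<phi> ` e0 = e" unfolding e0_def using image_inv_into_cancel[OF \<phi>V \<open>e \<subseteq> V\<close>] .
    ultimately have "e0 \<in> E" using aut e unfolding graph_aut_def by metis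
    then show "e \<in> (\<lambda>e. \<phi> ` e) ` E" using \<open>\<phi> ` e0 = e\<close> by blast
  qed
qed

lemma induces_aut_spatial_image:
  assumes ind: "induces_aut V E pos ar h \<phi>" and edges: "\<forall>e\<in>E. e \<subseteq> V"
  shows "h ` spatial_image V E pos ar = spatial_image V E pos ar"
proof -
  have aut: "graph_aut V E \<phi>" using ind unfolding induces_aut_def by blast
  have "h ` pos ` V = pos ` \<phi> ` V"
    using ind unfolding induces_aut_def image_image by (auto intro: image_cong)
  also have "\<dots> = pos ` V" using graph_aut_image_vertices[OF aut] by simp
  finally have vertices: "h ` pos ` V = pos ` V" .
  have "h ` (\<Union>e\<in>E. arc_img (ar e)) = (\<Union>e\<in>E. arc_img (ar (\<phi> ` e)))"
    using ind unfolding induces_aut_def image_UN by simp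
  also have "\<dots> = (\<Union>e\<in>(\<lambda>e. \<phi> ` e) ` E. arc_img (ar e))" by (simp add: image_image)
  also have "\<dots> = (\<Union>e\<in>E. arc_img (ar e))" using graph_aut_image_edges[OF aut edges] by simp
  finally have arcs: "h ` (\<Union>e\<in>E. arc_img (ar e)) = (\<Union>e\<in>E. arc_img (ar e))" .
  show ?thesis unfolding spatial_image_def image_Un vertices arcs ..
qed

lemma restr_aut_image:
  assumes "e \<subseteq> V'"
  shows "restr_aut V' \<phi> ` e = \<phi> ` e"
  using assms unfolding restr_aut_def by auto

lemma graph_aut_restr_aut:
  assumes aut: "graph_aut V E \<phi>" and sub: "subgraph V' E' V E"
    and inv_V': "\<phi> ` V' = V'" and inv_E': "(\<lambda>e. \<phi> ` e) ` E' = E'"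
  shows "graph_aut V' E' (restr_aut V' \<phi>)"
proof -
  have V'V: "V' \<subseteq> V" and edges: "\<forall>e\<in>E'. e \<subseteq> V'"
    using sub unfolding subgraph_def by auto
  have inj: "inj_on \<phi> V" using aut unfolding graph_aut_def bij_betw_def by blast
  have "bij_betw \<phi> V' V'" using inj V'V inv_V' by (simp add: bij_betw_def inj_on_subset)
  then have bij: "bij_betw (restr_aut V' \<phi>) V' V'"
    using bij_betw_cong[of V' "restr_aut V' \<phi>" \<phi> V'] by (simp add: restr_aut_def)
  have adj: "restr_aut V' \<phi> ` e \<in> E' \<longleftrightarrow> e \<in> E'" if e: "e \<subseteq> V'" for e
  proof
    assume "restr_aut V' \<phi> ` e \<in> E'"
    then have "\<phi> ` e \<in> (\<lambda>e. \<phi> ` e) ` E'" using inv_E' restr_aut_image[OF e] by simp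
    then obtain e0 where e0: "e0 \<in> E'" "\<phi> ` e = \<phi> ` e0" by blast
    have "e \<subseteq> V" "e0 \<subseteq> V" using e e0(1) edges V'V by auto
    then have "e = e0" using e0(2) by (simp add: inj_on_image_eq_iff[OF inj])
    then show "e \<in> E'" using e0 by simp
  next
    assume "e \<in> E'"
    then have "\<phi> ` e \<in> E'" using inv_E' by blast
    then show "restr_aut V' \<phi> ` e \<in> E'" by (simp add: restr_aut_image[OF e])
  qed
  have fixes_outside: "\<forall>x. x \<notin> V' \<longrightarrow> restr_aut V' \<phi> x = x" by (simp add: restr_aut_def)
  show ?thesis unfolding graph_aut_def by (simp add: bij fixes_outside adj)
qed

lemma induces_aut_restr_aut:
  assumes ind: "induces_aut V E pos ar h \<phi>" and sub: "subgraph V' E' V E"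
    and inv_V': "\<phi> ` V' = V'" and inv_E': "(\<lambda>e. \<phi> ` e) ` E' = E'"
  shows "induces_aut V' E' pos ar h (restr_aut V' \<phi>)"
proof -
  have V'V: "V' \<subseteq> V" and E'E: "E' \<subseteq> E" and edges: "\<forall>e\<in>E'. e \<subseteq> V'"
    using sub unfolding subgraph_def by auto
  have aut: "graph_aut V E \<phi>" using ind unfolding induces_aut_def by blast
  have "\<forall>v\<in>V'. h (pos v) = pos (restr_aut V' \<phi> v)"
    using ind V'V unfolding induces_aut_def restr_aut_def by auto
  moreover have "h ` arc_img (ar e) = arc_img (ar (restr_aut V' \<phi> ` e))" if e: "e \<in> E'" for e
  proof -
    have "h ` arc_img (ar e) = arc_img (ar (\<phi> ` e))"
      using ind e E'E unfolding induces_aut_def by blast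
    then show ?thesis using restr_aut_image[of e V' \<phi>] e edges by simp
  qed
  ultimately show ?thesis
    using graph_aut_restr_aut[OF aut sub inv_V' inv_E'] unfolding induces_aut_def by blast
qed

theorem mainTheorem3:
  fixes V V' :: "'v set" and E E' :: "'v set set"
    and pos :: "'v \<Rightarrow> nat \<Rightarrow> real" and ar :: "'v set \<Rightarrow> real \<Rightarrow> nat \<Rightarrow> real"
  assumes "finite_graph V E"
    and "subgraph V' E' V E"
    and "\<forall>\<phi>. graph_aut V E \<phi> \<longrightarrow> \<phi> ` V' = V' \<and> (\<lambda>e. \<phi> ` e) ` E' = E'"
    and "spatial_embedding V E pos ar"
  shows "restr_aut V' ` TSG V E pos ar \<subseteq> TSG V' E' pos ar
       \<and> restr_aut V' ` TSG_plus V E pos ar \<subseteq> TSG_plus V' E' pos ar"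
proof -
  have edges': "\<forall>e\<in>E'. e \<subseteq> V'" using assms(2) unfolding subgraph_def by blast
  have restrict: "induces_aut V' E' pos ar h (restr_aut V' \<phi>)
      \<and> h ` spatial_image V' E' pos ar = spatial_image V' E' pos ar"
    if "induces_aut V E pos ar h \<phi>" for h \<phi>
  proof -
    have "\<phi> ` V' = V'" "(\<lambda>e. \<phi> ` e) ` E' = E'"
      using that assms(3) unfolding induces_aut_def by blast+
    then have "induces_aut V' E' pos ar h (restr_aut V' \<phi>)"
      using induces_aut_restr_aut[OF that assms(2)] by blast
    then show ?thesis using induces_aut_spatial_image edges' by blast
  qed
  have "restr_aut V' \<phi> \<in> TSG V' E' pos ar" if "\<phi> \<in> TSG V E pos ar" for \<phi>
    using that restrict unfolding TSG_def by blast
  moreover have "restr_aut V' \<phi> \<in> TSG_plus V' E' pos ar" if "\<phi> \<in> TSG_plus V E pos ar" for \<phi>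
    using that restrict unfolding TSG_plus_def by blast
  ultimately show ?thesis by blast
qed

end
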